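(* Let $n\ge 2$, let $A$ be a Hermitian matrix of order $n$ and $\mathcal{O}\in\mathcal{C}_{sp}^{(n)}$. Let $A'$ be obtained from $A$ by applying one sweep ($N=n(n-1)/2$ steps) of the cyclic complex Jacobi method defined by $I_{\mathcal{O}}$. If all rotation angles satisfy $\phi_k\in[-\pi/4,\pi/4]$, $k\ge0$, then there is a constant $\gamma_n$ depending only on $n$ such that $S^2(A')\le\gamma_nS^2(A)$, $0\le\gamma_n<1$.
   Context: $\imath=\sqrt{-1}$. For $1\le i<j\le n$ and real $\phi,\alpha$, $R(i,j,\phi,\alpha)$ is the $n\times n$ matrix equal to $I_n$ except for entries $(i,i)=(j,j)=\cos\phi$, $(i,j)=-e^{\imath\alpha}\sin\phi$, $(j,i)=e^{-\imath\alpha}\sin\phi$. The off-norm is $S(X)=\|X-\mathrm{diag}(X)\|_F$. The complex Jacobi method on Hermitian $A$ is the iteration $A^{(0)}=A$, $A^{(k+1)}=U_k^*A^{(k)}U_k$, with $U_k=R(i_k,j_k,\phi_k,\alpha_k)$ and angles chosen so that the entry $(i_k,j_k)$ (hence also $(j_k,i_k)$) of $A^{(k+1)}$ is zero. Let $\mathcal{P}_n=\{(r,s):1\le r<s\le n\}$, $N=n(n-1)/2$. For an ordering $\mathcal{O}=(i_0,j_0),\dots,(i_{N-1},j_{N-1})$ of $\mathcal{P}_n$ (each pair exactly once), the cyclic strategy $I_{\mathcal{O}}$ uses $(i_{k\bmod N},j_{k\bmod N})$ as $k$-th pivot pair; a sweep is $N$ consecutive steps. $\mathcal{C}_c^{(n)}$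 is the set of orderings $(1,2),(\tau_3(1),3),(\tau_3(2),3),\dots,(\tau_n(1),n),\dots,(\tau_n(n-1),n)$, $\tau_j$ a permutation of $\{1,\dots,j-1\}$; $\mathcal{C}_r^{(n)}$ is the set of orderings $(n-1,n),(n-2,\tau_{n-2}(n-1)),(n-2,\tau_{n-2}(n)),\dots,(1,\tau_1(2)),\dots,(1,\tau_1(n))$, $\tau_i$ a permutation of $\{i+1,\dots,n\}$. The reverse of $(i_0,j_0),\dots,(i_r,j_r)$ is $(i_r,j_r),\dots,(i_0,j_0)$; $\overleftarrow{\mathcal{C}}_c^{(n)}$, $\overleftarrow{\mathcal{C}}_r^{(n)}$ are the sets of reverses of orderings in $\mathcal{C}_c^{(n)}$, $\mathcal{C}_r^{(n)}$, and $\mathcal{C}_{sp}^{(n)}=\mathcal{C}_c^{(n)}\cup\overleftarrow{\mathcal{C}}_c^{(n)}\cup\mathcal{C}_r^{(n)}\cup\overleftarrow{\mathcal{C}}_r^{(n)}$. *)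

theory Defs
  imports "Jordan_Normal_Form.Matrix"
begin

text \<open>Indices are 0-based: the paper's index r in 1..n corresponds to r-1 in 0..n-1.\<close>

definition ctrans :: "complex mat \<Rightarrow> complex mat" where
  "ctrans A = mat (dim_col A) (dim_row A) (\<lambda>(r,s). cnj (A $$ (s,r)))"

definition hermitian_mat :: "nat \<Rightarrow> complex mat \<Rightarrow> bool" where
  "hermitian_mat n A \<longleftrightarrow> A \<in> carrier_mat n n \<and> ctrans A = A"

definition rot :: "nat \<Rightarrow> nat \<Rightarrow> nat \<Rightarrow> real \<Rightarrow> real \<Rightarrow> complex mat" where
  "rot n i j \<phi> \<alpha> = mat n n (\<lambda>(r,s).
     if (r = i \<and> s = i) \<or> (r = j \<and> s = j) then complex_of_real (cos \<phi>)
     else if r = i \<and> s = j then - exp (\<i> * complex_of_real \<alpha>) * complex_of_real (sin \<phi>)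
     else if r = j \<and> s = i then exp (- (\<i> * complex_of_real \<alpha>)) * complex_of_real (sin \<phi>)
     else if r = s then 1 else 0)"

definition off2 :: "complex mat \<Rightarrow> real" where
  "off2 X = (\<Sum>r<dim_row X. \<Sum>s<dim_col X. if r = s then 0 else (cmod (X $$ (r,s)))\<^sup>2)"

definition pivot_pairs :: "nat \<Rightarrow> (nat \<times> nat) set" where
  "pivot_pairs n = {(r,s). r < s \<and> s < n}"

text \<open>Column-cyclic orderings: blocks for columns 2..n (1..n-1 0-based), each block
  (tau_j(1),j),...,(tau_j(j-1),j) with tau_j a permutation of the rows above j.\<close>
definition C_c :: "nat \<Rightarrow> (nat \<times> nat) list set" where
  "C_c n = {ord. \<exists>\<tau> :: nat \<Rightarrow> nat list.
      (\<forall>j. distinct (\<tau> j) \<and> set (\<tau> j) = {0..<j}) \<and>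
      ord = concat (map (\<lambda>j. map (\<lambda>i. (i, j)) (\<tau> j)) [1..<n])}"

text \<open>Row-cyclic orderings: blocks for rows n-1 down to 1 (n-2 down to 0 0-based).\<close>
definition C_r :: "nat \<Rightarrow> (nat \<times> nat) list set" where
  "C_r n = {ord. \<exists>\<tau> :: nat \<Rightarrow> nat list.
      (\<forall>i. distinct (\<tau> i) \<and> set (\<tau> i) = {i<..<n}) \<and>
      ord = concat (map (\<lambda>i. map (\<lambda>j. (i, j)) (\<tau> i)) (rev [0..<n - 1]))}"

definition C_sp :: "nat \<Rightarrow> (nat \<times> nat) list set" where
  "C_sp n = C_c n \<union> rev ` C_c n \<union> C_r n \<union> rev ` C_r n"

definition jacobi_sweep :: "nat \<Rightarrow> (nat \<times> nat) list \<Rightarrow> complex mat \<Rightarrow> complex mat \<Rightarrow> bool" where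
  "jacobi_sweep n ord A A' \<longleftrightarrow>
     (\<exists>As :: nat \<Rightarrow> complex mat. \<exists>\<phi> \<alpha> :: nat \<Rightarrow> real.
        As 0 = A \<and> As (n * (n - 1) div 2) = A' \<and>
        (\<forall>k < n * (n - 1) div 2.
           (let (i, j) = ord ! k; U = rot n i j (\<phi> k) (\<alpha> k) in
              As (Suc k) = ctrans U * As k * U \<and>
              As (Suc k) $$ (i, j) = 0 \<and>
              - (pi / 4) \<le> \<phi> k \<and> \<phi> k \<le> pi / 4)))"

end

theory Submission
  imports Defs
begin

text \<open>
  A Jacobi step with pivot (i, j) lowers \<open>S\<^sup>2\<close> by exactly \<open>2 |a\<^sub>i\<^sub>j|\<^sup>2\<close>, so a sweep lowers it
  by twice the sum of the squared pivot entries. If p is the square root of that sum, it therefore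
  suffices to bound every off-diagonal entry of A, or of A', by a constant (depending on n) times p.

  Since \<open>|\<phi>| \<le> \<pi>/4\<close>, every rotation has cosine at least 1/2, so outside the pivot rows each entry
  changes by at most a bounded factor, both forwards and backwards in time. For a column-cyclic
  ordering one inducts over the leading blocks. Suppose the leading s \<times> s block is bounded after the
  first s(s-1)/2 steps. Then so is column s above the diagonal at that moment: walking back from the
  step that annihilates (r, s), each rotation of column block s mixes column s only with a column of
  the leading block that has not moved yet. The s rotations of the block then at most double the bound
  each time, so after a full sweep the whole matrix A' is bounded. A reversed ordering is handled by
  reading the sweep backwards in time, which bounds A instead. A row-cyclic ordering becomes
  column-cyclic after conjugation with the exchange matrix.
\<close>

lemma sum_lessThan_two_terms:
  fixes f :: "nat \<Rightarrow> 'a::comm_monoid_add"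
  assumes "a \<noteq> b" "a < n" "b < n" "\<And>t. t < n \<Longrightarrow> t \<notin> {a, b} \<Longrightarrow> f t = 0"
  shows "(\<Sum>t<n. f t) = f a + f b"
proof -
  have "(\<Sum>t<n. f t) = (\<Sum>t\<in>{a, b}. f t)"
    by (rule sum.mono_neutral_right) (use assms in auto)
  then show ?thesis using assms(1) by simp
qed

section \<open>Hermitian matrices and plane rotations\<close>

lemma dim_ctrans [simp]: "dim_row (ctrans A) = dim_col A" "dim_col (ctrans A) = dim_row A"
  by (simp_all add: ctrans_def)

lemma ctrans_carrier: "A \<in> carrier_mat n m \<Longrightarrow> ctrans A \<in> carrier_mat m n"
  by (simp add: ctrans_def)

lemma index_ctrans [simp]: "r < dim_col A \<Longrightarrow> s < dim_row A \<Longrightarrow> ctrans A $$ (r, s) = cnj (A $$ (s, r))"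
  by (simp add: ctrans_def)

lemma rot_carrier [simp]: "rot n i j \<phi> \<alpha> \<in> carrier_mat n n"
  by (simp add: rot_def)

lemma index_congruence:
  assumes "X \<in> carrier_mat n n" "U \<in> carrier_mat n n" "r < n" "t < n"
  shows "(ctrans U * X * U) $$ (r, t) = (\<Sum>v<n. \<Sum>u<n. cnj (U $$ (u, r)) * X $$ (u, v) * U $$ (v, t))"
proof -
  have "(ctrans U * X * U) $$ (r, t) = (\<Sum>v<n. (\<Sum>u<n. cnj (U $$ (u, r)) * X $$ (u, v)) * U $$ (v, t))"
    using assms by (simp add: scalar_prod_def atLeast0LessThan)
  then show ?thesis by (simp add: sum_distrib_right)
qed

lemma hermitian_mat_index:
  assumes "hermitian_mat n X" "r < n" "s < n"
  shows "X $$ (s, r) = cnj (X $$ (r, s))"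
proof -
  have X: "X \<in> carrier_mat n n" and ctrans: "ctrans X = X" using assms(1) by (auto simp: hermitian_mat_def)
  have "ctrans X $$ (s, r) = cnj (X $$ (r, s))" using X assms(2,3) by simp
  then show ?thesis by (simp only: ctrans)
qed

lemma hermitian_mat_norm_sym:
  "hermitian_mat n X \<Longrightarrow> r < n \<Longrightarrow> s < n \<Longrightarrow> cmod (X $$ (s, r)) = cmod (X $$ (r, s))"
  using hermitian_mat_index[of n X r s] by simp

lemma hermitian_matI:
  assumes "Y \<in> carrier_mat n n" "\<And>r s. r < n \<Longrightarrow> s < n \<Longrightarrow> Y $$ (s, r) = cnj (Y $$ (r, s))"
  shows "hermitian_mat n Y"
  unfolding hermitian_mat_def
proof (intro conjI eq_matI)
  show "Y \<in> carrier_mat n n" by fact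
  then show "dim_row (ctrans Y) = dim_row Y" "dim_col (ctrans Y) = dim_col Y" by simp_all
  fix r s assume "r < dim_row Y" "s < dim_col Y"
  then show "ctrans Y $$ (r, s) = Y $$ (r, s)" using assms(1) assms(2)[of s r] by simp
qed

lemma hermitian_mat_congruence:
  assumes X: "hermitian_mat n X" and U: "U \<in> carrier_mat n n"
  shows "hermitian_mat n (ctrans U * X * U)"
proof (rule hermitian_matI)
  have Xc: "X \<in> carrier_mat n n" using X by (simp add: hermitian_mat_def)
  then show "ctrans U * X * U \<in> carrier_mat n n" using U by (meson ctrans_carrier mult_carrier_mat)
  fix r s assume r: "r < n" and s: "s < n"
  have "(ctrans U * X * U) $$ (s, r) = (\<Sum>v<n. \<Sum>u<n. cnj (U $$ (u, s)) * X $$ (u, v) * U $$ (v, r))"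
    by (rule index_congruence[OF Xc U s r])
  also have "\<dots> = (\<Sum>u<n. \<Sum>v<n. cnj (U $$ (u, s)) * X $$ (u, v) * U $$ (v, r))"
    by (rule sum.swap)
  also have "\<dots> = (\<Sum>u<n. \<Sum>v<n. cnj (cnj (U $$ (v, r)) * X $$ (v, u) * U $$ (u, s)))"
  proof (intro sum.cong refl)
    fix u v assume "u \<in> {..<n}" "v \<in> {..<n}"
    then have "X $$ (u, v) = cnj (X $$ (v, u))" using hermitian_mat_index[OF X, of v u] by simp
    then show "cnj (U $$ (u, s)) * X $$ (u, v) * U $$ (v, r) = cnj (cnj (U $$ (v, r)) * X $$ (v, u) * U $$ (u, s))"
      by simp
  qed
  also have "\<dots> = cnj ((ctrans U * X * U) $$ (r, s))"
    using index_congruence[OF Xc U r s] by simp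
  finally show "(ctrans U * X * U) $$ (s, r) = cnj ((ctrans U * X * U) $$ (r, s))" .
qed

lemma exp_imaginary_eq_cis:
  "exp (\<i> * complex_of_real \<alpha>) = cis \<alpha>" "exp (- (\<i> * complex_of_real \<alpha>)) = cnj (cis \<alpha>)"
proof -
  show "exp (\<i> * complex_of_real \<alpha>) = cis \<alpha>" by (simp add: cis_conv_exp)
  have "exp (- (\<i> * complex_of_real \<alpha>)) = cis (- \<alpha>)" by (simp add: cis_conv_exp)
  then show "exp (- (\<i> * complex_of_real \<alpha>)) = cnj (cis \<alpha>)" by (simp add: cis_cnj)
qed

lemma rot_congruence_row:
  fixes X :: "complex mat" and \<phi> \<alpha> :: real
  assumes X: "X \<in> carrier_mat n n" and ij: "i < j" "j < n" and r: "r < n" "r \<notin> {i, j}"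
  defines "Y \<equiv> ctrans (rot n i j \<phi> \<alpha>) * X * rot n i j \<phi> \<alpha>"
  shows "\<And>t. t < n \<Longrightarrow> t \<notin> {i, j} \<Longrightarrow> Y $$ (r, t) = X $$ (r, t)"
    and "Y $$ (r, i) = of_real (cos \<phi>) * X $$ (r, i) + cnj (cis \<alpha>) * of_real (sin \<phi>) * X $$ (r, j)"
    and "Y $$ (r, j) = - cis \<alpha> * of_real (sin \<phi>) * X $$ (r, i) + of_real (cos \<phi>) * X $$ (r, j)"
proof -
  let ?U = "rot n i j \<phi> \<alpha>"
  have row: "Y $$ (r, t) = (\<Sum>v<n. X $$ (r, v) * ?U $$ (v, t))" if "t < n" for t
    unfolding Y_def index_congruence[OF X rot_carrier r(1) that]
  proof (intro sum.cong refl)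
    fix v assume "v \<in> {..<n}"
    have "(\<Sum>u<n. cnj (?U $$ (u, r)) * X $$ (u, v) * ?U $$ (v, t))
        = (\<Sum>u<n. if u = r then X $$ (r, v) * ?U $$ (v, t) else 0)"
      by (intro sum.cong refl) (use r in \<open>auto simp: rot_def\<close>)
    then show "(\<Sum>u<n. cnj (?U $$ (u, r)) * X $$ (u, v) * ?U $$ (v, t)) = X $$ (r, v) * ?U $$ (v, t)"
      using r by simp
  qed
  show "Y $$ (r, t) = X $$ (r, t)" if "t < n" "t \<notin> {i, j}" for t
  proof -
    have "(\<Sum>v<n. X $$ (r, v) * ?U $$ (v, t)) = (\<Sum>v<n. if v = t then X $$ (r, t) else 0)"
      by (intro sum.cong refl) (use that in \<open>auto simp: rot_def\<close>)
    then show ?thesis using row[OF \<open>t < n\<close>] \<open>t < n\<close> by simp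
  qed
  have "Y $$ (r, i) = X $$ (r, i) * ?U $$ (i, i) + X $$ (r, j) * ?U $$ (j, i)"
    unfolding row[OF order.strict_trans[OF ij]] using ij by (intro sum_lessThan_two_terms) (auto simp: rot_def)
  then show "Y $$ (r, i) = of_real (cos \<phi>) * X $$ (r, i) + cnj (cis \<alpha>) * of_real (sin \<phi>) * X $$ (r, j)"
    using ij by (simp add: rot_def exp_imaginary_eq_cis mult_ac)
  have "Y $$ (r, j) = X $$ (r, i) * ?U $$ (i, j) + X $$ (r, j) * ?U $$ (j, j)"
    unfolding row[OF ij(2)] using ij by (intro sum_lessThan_two_terms) (auto simp: rot_def)
  then show "Y $$ (r, j) = - cis \<alpha> * of_real (sin \<phi>) * X $$ (r, i) + of_real (cos \<phi>) * X $$ (r, j)"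
    using ij by (simp add: rot_def exp_imaginary_eq_cis mult_ac)
qed

lemma plane_rotation_pair:
  fixes x y E :: complex and c s :: real
  assumes cs: "c\<^sup>2 + s\<^sup>2 = 1" and E: "E * cnj E = 1"
  defines "x' \<equiv> of_real c * x + cnj E * of_real s * y" and "y' \<equiv> - E * of_real s * x + of_real c * y"
  shows "x = of_real c * x' + (- cnj E * of_real s) * y'"
    and "y = of_real c * y' + E * of_real s * x'"
    and "(cmod x')\<^sup>2 + (cmod y')\<^sup>2 = (cmod x)\<^sup>2 + (cmod y)\<^sup>2"
proof -
  have cs': "(of_real c)\<^sup>2 + (of_real s)\<^sup>2 = (1::complex)"
    by (metis cs of_real_1 of_real_add of_real_power)
  have "of_real c * x' + (- cnj E * of_real s) * y' = x * ((of_real c)\<^sup>2 + (E * cnj E) * (of_real s)\<^sup>2)"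
    by (simp add: x'_def y'_def algebra_simps power2_eq_square)
  then show "x = of_real c * x' + (- cnj E * of_real s) * y'" using cs' E by simp
  have "of_real c * y' + E * of_real s * x' = y * ((of_real c)\<^sup>2 + (E * cnj E) * (of_real s)\<^sup>2)"
    by (simp add: x'_def y'_def algebra_simps power2_eq_square)
  then show "y = of_real c * y' + E * of_real s * x'" using cs' E by simp
  have "complex_of_real ((cmod x')\<^sup>2 + (cmod y')\<^sup>2) = x' * cnj x' + y' * cnj y'"
    by (simp only: of_real_add complex_norm_square)
  also have "\<dots> = (x * cnj x + y * cnj y) * ((of_real c)\<^sup>2 + (E * cnj E) * (of_real s)\<^sup>2)"
    by (simp add: x'_def y'_def algebra_simps power2_eq_square)
  also have "\<dots> = complex_of_real ((cmod x)\<^sup>2 + (cmod y)\<^sup>2)"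
    using cs' E by (simp only: of_real_add complex_norm_square) simp
  finally show "(cmod x')\<^sup>2 + (cmod y')\<^sup>2 = (cmod x)\<^sup>2 + (cmod y)\<^sup>2"
    using of_real_eq_iff by blast
qed

lemma rotated_entry_bounds:
  fixes x y z w :: complex and c :: real
  assumes z: "z = of_real c * x + w * y" and c: "1/2 \<le> c" "c \<le> 1" and w: "cmod w \<le> 1"
  shows "cmod z \<le> cmod x + cmod y \<and> cmod x \<le> 2 * (cmod z + cmod y)"
proof
  have cx: "cmod (of_real c * x) = c * cmod x" using c by (simp add: norm_mult)
  have wy: "cmod (w * y) \<le> cmod y" using w by (simp add: norm_mult mult_left_le_one_le)
  have "cmod z \<le> c * cmod x + cmod y" using z cx wy norm_triangle_ineq[of "of_real c * x" "w * y"] by simp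
  also have "\<dots> \<le> cmod x + cmod y" using c by (simp add: mult_left_le_one_le)
  finally show "cmod z \<le> cmod x + cmod y" .
  have "c * cmod x \<le> cmod z + cmod y"
    using z cx wy norm_triangle_ineq4[of z "w * y"] by simp
  moreover have "cmod x \<le> 2 * (c * cmod x)" using mult_right_mono[of 1 "2 * c" "cmod x"] c by simp
  ultimately show "cmod x \<le> 2 * (cmod z + cmod y)" by simp
qed

lemma cos_ge_half: "\<bar>\<phi>\<bar> \<le> pi / 4 \<Longrightarrow> 1/2 \<le> cos \<phi>"
proof -
  assume "\<bar>\<phi>\<bar> \<le> pi / 4"
  then have "cos (pi / 4) \<le> cos \<bar>\<phi>\<bar>" by (subst cos_mono_le_eq) auto
  moreover have "1/2 \<le> cos (pi / 4)" by (simp add: cos_45)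
  ultimately show "1/2 \<le> cos \<phi>" by simp
qed

text \<open>
  The effect of a rotation in the (a, b)-plane whose cosine is at least 1/2 on the rows other than
  a and b; rows a and b are reached through Hermitian symmetry.
\<close>

definition plane_step :: "nat \<Rightarrow> (nat \<Rightarrow> nat \<Rightarrow> complex) \<Rightarrow> (nat \<Rightarrow> nat \<Rightarrow> complex) \<Rightarrow> nat \<Rightarrow> nat \<Rightarrow> bool" where
  "plane_step n X Y a b \<longleftrightarrow>
     (\<forall>r<n. \<forall>t<n. r \<notin> {a, b} \<longrightarrow> t \<notin> {a, b} \<longrightarrow> Y r t = X r t) \<and>
     (\<forall>r<n. \<forall>u v. r \<notin> {a, b} \<longrightarrow> {u, v} = {a, b} \<longrightarrow>
        cmod (Y r u) \<le> cmod (X r u) + cmod (X r v) \<and> cmod (X r u) \<le> 2 * (cmod (Y r u) + cmod (X r v)))"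

lemma plane_step_commute: "plane_step n X Y b a = plane_step n X Y a b"
  by (simp add: plane_step_def insert_commute)

lemma rot_congruence_plane_step:
  fixes X :: "complex mat" and \<phi> \<alpha> :: real
  assumes X: "X \<in> carrier_mat n n" and ij: "i < j" "j < n" and \<phi>: "\<bar>\<phi>\<bar> \<le> pi / 4"
  defines "Y \<equiv> ctrans (rot n i j \<phi> \<alpha>) * X * rot n i j \<phi> \<alpha>"
  shows "plane_step n (\<lambda>r t. X $$ (r, t)) (\<lambda>r t. Y $$ (r, t)) i j \<and>
         plane_step n (\<lambda>r t. Y $$ (r, t)) (\<lambda>r t. X $$ (r, t)) i j"
proof -
  have c: "1/2 \<le> cos \<phi>" "cos \<phi> \<le> 1" using cos_ge_half[OF \<phi>] by simp_all
  have E: "cis \<alpha> * cnj (cis \<alpha>) = 1" by (simp add: cis_cnj cis_mult)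
  have w: "cmod (cnj (cis \<alpha>) * of_real (sin \<phi>)) \<le> 1" "cmod (- cnj (cis \<alpha>) * of_real (sin \<phi>)) \<le> 1"
    "cmod (cis \<alpha> * of_real (sin \<phi>)) \<le> 1" "cmod (- cis \<alpha> * of_real (sin \<phi>)) \<le> 1"
    by (simp_all add: norm_mult)
  have bounds: "cmod (Y $$ (r, u)) \<le> cmod (X $$ (r, u)) + cmod (X $$ (r, v)) \<and>
      cmod (X $$ (r, u)) \<le> 2 * (cmod (Y $$ (r, u)) + cmod (X $$ (r, v))) \<and>
      cmod (X $$ (r, u)) \<le> cmod (Y $$ (r, u)) + cmod (Y $$ (r, v)) \<and>
      cmod (Y $$ (r, u)) \<le> 2 * (cmod (X $$ (r, u)) + cmod (Y $$ (r, v)))"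
    if r: "r < n" "r \<notin> {i, j}" and uv: "{u, v} = {i, j}" for r u v
  proof -
    note row = rot_congruence_row[OF X ij r, where \<phi> = \<phi> and \<alpha> = \<alpha>, folded Y_def]
    note inv = plane_rotation_pair[OF sin_cos_squared_add2[of \<phi>] E, where x = "X $$ (r, i)" and y = "X $$ (r, j)", folded row(2,3)]
    have "Y $$ (r, i) = of_real (cos \<phi>) * X $$ (r, i) + cnj (cis \<alpha>) * of_real (sin \<phi>) * X $$ (r, j)"
      "Y $$ (r, j) = of_real (cos \<phi>) * X $$ (r, j) + (- cis \<alpha> * of_real (sin \<phi>)) * X $$ (r, i)"
      using row(2,3) by (simp_all add: algebra_simps)
    note fwd = this[THEN rotated_entry_bounds[OF _ c]]
    note bwd = inv(1,2)[THEN rotated_entry_bounds[OF _ c]]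
    have "(u = i \<and> v = j) \<or> (u = j \<and> v = i)" using uv ij by (auto simp: doubleton_eq_iff)
    then show ?thesis using fwd bwd w by auto
  qed
  show ?thesis
    unfolding plane_step_def using rot_congruence_row(1)[OF X ij, where \<phi> = \<phi> and \<alpha> = \<alpha>, folded Y_def] bounds
    by auto
qed

lemma off2_rot_congruence:
  fixes X :: "complex mat" and \<phi> \<alpha> :: real
  assumes X: "hermitian_mat n X" and ij: "i < j" "j < n"
  defines "Y \<equiv> ctrans (rot n i j \<phi> \<alpha>) * X * rot n i j \<phi> \<alpha>"
  shows "off2 Y = off2 X - 2 * (cmod (X $$ (i, j)))\<^sup>2 + 2 * (cmod (Y $$ (i, j)))\<^sup>2"
proof -
  have Xc: "X \<in> carrier_mat n n" using X by (simp add: hermitian_mat_def)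
  have Y: "hermitian_mat n Y" unfolding Y_def by (rule hermitian_mat_congruence[OF X rot_carrier])
  then have Yc: "Y \<in> carrier_mat n n" by (simp add: hermitian_mat_def)
  define g where "g M r t = (if r = t then 0 else (cmod (M $$ (r, t)))\<^sup>2)" for M :: "complex mat" and r t
  define h where "h r t = g Y r t - g X r t" for r t
  have h_sym: "h t r = h r t" if "r < n" "t < n" for r t
    unfolding h_def g_def using hermitian_mat_norm_sym[OF X that] hermitian_mat_norm_sym[OF Y that] by auto
  have h_pair: "h r i + h r j = 0" if r: "r < n" "r \<notin> {i, j}" for r
  proof -
    note row = rot_congruence_row[OF Xc ij r, where \<phi> = \<phi> and \<alpha> = \<alpha>, folded Y_def]
    have E: "cis \<alpha> * cnj (cis \<alpha>) = 1" by (simp add: cis_cnj cis_mult)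
    show ?thesis
      using plane_rotation_pair(3)[OF sin_cos_squared_add2[of \<phi>] E, where x = "X $$ (r, i)" and y = "X $$ (r, j)"] r
      unfolding h_def g_def row(2,3) by auto
  qed
  have row_zero: "(\<Sum>t<n. h r t) = 0" if r: "r < n" "r \<notin> {i, j}" for r
  proof -
    have "(\<Sum>t<n. h r t) = h r i + h r j"
      by (rule sum_lessThan_two_terms)
        (use ij r rot_congruence_row(1)[OF Xc ij r, where \<phi> = \<phi> and \<alpha> = \<alpha>, folded Y_def]
          in \<open>auto simp: h_def g_def\<close>)
    then show ?thesis using h_pair[OF r] by simp
  qed
  have "(\<Sum>r<n. \<Sum>t<n. h r t) = (\<Sum>t<n. h i t) + (\<Sum>t<n. h j t)"
    by (rule sum_lessThan_two_terms) (use ij row_zero in auto)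
  also have "\<dots> = (\<Sum>t<n. h i t + h j t)" by (simp add: sum.distrib)
  also have "\<dots> = (h i i + h j i) + (h i j + h j j)"
  proof (rule sum_lessThan_two_terms)
    fix t assume t: "t < n" "t \<notin> {i, j}"
    then show "h i t + h j t = 0" using h_sym[of i t] h_sym[of j t] h_pair[OF t] ij by simp
  qed (use ij in auto)
  also have "\<dots> = 2 * h i j" using h_sym[of i j] ij by (simp add: h_def g_def)
  finally have "(\<Sum>r<n. \<Sum>t<n. h r t) = 2 * h i j" .
  moreover have "off2 Y - off2 X = (\<Sum>r<n. \<Sum>t<n. h r t)"
    using Xc Yc by (simp add: off2_def h_def g_def sum_subtractf)
  ultimately show ?thesis using ij by (simp add: h_def g_def)
qed

section \<open>Sequences of rotations\<close>

definition tri :: "nat \<Rightarrow> nat" where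
  "tri s = s * (s - 1) div 2"

lemma tri_Suc: "tri (Suc s) = tri s + s"
  by (cases s) (simp_all add: tri_def)

lemma tri_mono: "s \<le> s' \<Longrightarrow> tri s \<le> tri s'"
  unfolding tri_def by (intro div_le_mono mult_le_mono) auto

definition jacobi_steps ::
    "nat \<Rightarrow> nat \<Rightarrow> (nat \<Rightarrow> nat \<times> nat) \<Rightarrow> (nat \<Rightarrow> complex mat) \<Rightarrow> (nat \<Rightarrow> real) \<Rightarrow> (nat \<Rightarrow> real) \<Rightarrow> bool" where
  "jacobi_steps n N pr As \<phi> \<alpha> \<longleftrightarrow> (\<forall>k<N. \<forall>i j. pr k = (i, j) \<longrightarrow> i < j \<and> j < n \<and>
     As (Suc k) = ctrans (rot n i j (\<phi> k) (\<alpha> k)) * As k * rot n i j (\<phi> k) (\<alpha> k) \<and>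
     As (Suc k) $$ (i, j) = 0 \<and> \<bar>\<phi> k\<bar> \<le> pi / 4)"

lemma jacobi_stepsD:
  "jacobi_steps n N pr As \<phi> \<alpha> \<Longrightarrow> k < N \<Longrightarrow> pr k = (i, j) \<Longrightarrow> i < j \<and> j < n \<and>
     As (Suc k) = ctrans (rot n i j (\<phi> k) (\<alpha> k)) * As k * rot n i j (\<phi> k) (\<alpha> k) \<and>
     As (Suc k) $$ (i, j) = 0 \<and> \<bar>\<phi> k\<bar> \<le> pi / 4"
  unfolding jacobi_steps_def by blast

lemma jacobi_sweepE:
  assumes "jacobi_sweep n ord A A'" "\<And>k. k < tri n \<Longrightarrow> ord ! k \<in> pivot_pairs n"
  obtains As \<phi> \<alpha> where "As 0 = A" "As (tri n) = A'" "jacobi_steps n (tri n) (nth ord) As \<phi> \<alpha>"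
proof -
  obtain As :: "nat \<Rightarrow> complex mat" and \<phi> \<alpha> :: "nat \<Rightarrow> real" where
    As0: "As 0 = A" and AsN: "As (tri n) = A'" and step: "\<forall>k < tri n.
       (let (i, j) = ord ! k; U = rot n i j (\<phi> k) (\<alpha> k) in
          As (Suc k) = ctrans U * As k * U \<and> As (Suc k) $$ (i, j) = 0 \<and>
          - (pi / 4) \<le> \<phi> k \<and> \<phi> k \<le> pi / 4)"
    using assms(1) unfolding jacobi_sweep_def tri_def by blast
  have "i < j \<and> j < n \<and>
      As (Suc k) = ctrans (rot n i j (\<phi> k) (\<alpha> k)) * As k * rot n i j (\<phi> k) (\<alpha> k) \<and>
      As (Suc k) $$ (i, j) = 0 \<and> \<bar>\<phi> k\<bar> \<le> pi / 4" if "k < tri n" "ord ! k = (i, j)" for k i j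
    using step[rule_format, OF that(1)] assms(2)[OF that(1)] that(2) by (auto simp: Let_def pivot_pairs_def abs_le_iff)
  then have "jacobi_steps n (tri n) (nth ord) As \<phi> \<alpha>"
    unfolding jacobi_steps_def by blast
  with As0 AsN show thesis by (rule that)
qed

lemma jacobi_steps_hermitian:
  assumes "hermitian_mat n (As 0)" "jacobi_steps n N pr As \<phi> \<alpha>" "k \<le> N"
  shows "hermitian_mat n (As k)"
  using assms(3)
proof (induction k)
  case 0 show ?case by (rule assms(1))
next
  case (Suc k)
  obtain i j where "pr k = (i, j)" by fastforce
  then show ?case
    using jacobi_stepsD[OF assms(2)] hermitian_mat_congruence[OF Suc.IH rot_carrier] Suc.prems by simp
qed

lemma jacobi_steps_off2:
  assumes herm: "hermitian_mat n (As 0)" and steps: "jacobi_steps n N pr As \<phi> \<alpha>"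
  shows "off2 (As N) = off2 (As 0) - 2 * (\<Sum>k<N. (cmod (As k $$ pr k))\<^sup>2)"
proof -
  have "off2 (As (Suc k)) - off2 (As k) = - 2 * (cmod (As k $$ pr k))\<^sup>2" if "k < N" for k
  proof -
    obtain i j where ij: "pr k = (i, j)" by fastforce
    with jacobi_stepsD[OF steps that] have "i < j" "j < n"
      and Y: "As (Suc k) = ctrans (rot n i j (\<phi> k) (\<alpha> k)) * As k * rot n i j (\<phi> k) (\<alpha> k)"
      and zero: "As (Suc k) $$ (i, j) = 0" by auto
    then have "off2 (As (Suc k)) = off2 (As k) - 2 * (cmod (As k $$ (i, j)))\<^sup>2 + 2 * (cmod (As (Suc k) $$ (i, j)))\<^sup>2"
      unfolding Y using off2_rot_congruence jacobi_steps_hermitian[OF herm steps] that by simp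
    then show ?thesis using zero ij by simp
  qed
  then show ?thesis
    using sum_lessThan_telescope[of "\<lambda>k. off2 (As k)" N] by (simp add: sum_negf sum_distrib_left)
qed

text \<open>
  Asking for the step relation in both directions makes the
  notion invariant under reversing time.
\<close>

definition rotation_trace ::
    "nat \<Rightarrow> nat \<Rightarrow> (nat \<Rightarrow> nat \<Rightarrow> nat \<Rightarrow> complex) \<Rightarrow> (nat \<Rightarrow> nat \<times> nat) \<Rightarrow> real \<Rightarrow> bool" where
  "rotation_trace n N B pr p \<longleftrightarrow>
     (\<forall>k\<le>N. \<forall>r<n. \<forall>t<n. cmod (B k t r) = cmod (B k r t)) \<and>
     (\<forall>k<N. \<forall>a b. pr k = (a, b) \<longrightarrow> a < b \<and> b < n \<and>
        plane_step n (B k) (B (Suc k)) a b \<and> plane_step n (B (Suc k)) (B k) a b \<and>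
        cmod (B k a b) \<le> p \<and> cmod (B (Suc k) a b) \<le> p)"

lemma rotation_traceI:
  assumes "\<And>k r t. k \<le> N \<Longrightarrow> r < n \<Longrightarrow> t < n \<Longrightarrow> cmod (B k t r) = cmod (B k r t)"
    and "\<And>k a b. k < N \<Longrightarrow> pr k = (a, b) \<Longrightarrow> a < b \<and> b < n \<and>
      plane_step n (B k) (B (Suc k)) a b \<and> plane_step n (B (Suc k)) (B k) a b \<and>
      cmod (B k a b) \<le> p \<and> cmod (B (Suc k) a b) \<le> p"
  shows "rotation_trace n N B pr p"
  using assms unfolding rotation_trace_def by blast

lemma rotation_trace_norm_sym:
  "rotation_trace n N B pr p \<Longrightarrow> k \<le> N \<Longrightarrow> r < n \<Longrightarrow> t < n \<Longrightarrow> cmod (B k t r) = cmod (B k r t)"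
  by (simp add: rotation_trace_def)

lemma rotation_trace_step:
  "rotation_trace n N B pr p \<Longrightarrow> k < N \<Longrightarrow> pr k = (a, b) \<Longrightarrow> a < b \<and> b < n \<and>
    plane_step n (B k) (B (Suc k)) a b \<and> plane_step n (B (Suc k)) (B k) a b \<and>
    cmod (B k a b) \<le> p \<and> cmod (B (Suc k) a b) \<le> p"
  by (simp add: rotation_trace_def)

lemma jacobi_steps_rotation_trace:
  assumes herm: "hermitian_mat n (As 0)" and steps: "jacobi_steps n N pr As \<phi> \<alpha>"
  shows "rotation_trace n N (\<lambda>k r t. As k $$ (r, t)) pr (sqrt (\<Sum>k<N. (cmod (As k $$ pr k))\<^sup>2))"
proof (rule rotation_traceI)
  fix k r t assume "k \<le> N" "r < n" "t < n"
  then show "cmod (As k $$ (t, r)) = cmod (As k $$ (r, t))"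
    using hermitian_mat_norm_sym[OF jacobi_steps_hermitian[OF herm steps]] by simp
next
  fix k i j assume k: "k < N" and ij: "pr k = (i, j)"
  from jacobi_stepsD[OF steps k ij] have ij_less: "i < j" "j < n"
    and Y: "As (Suc k) = ctrans (rot n i j (\<phi> k) (\<alpha> k)) * As k * rot n i j (\<phi> k) (\<alpha> k)"
    and zero: "As (Suc k) $$ (i, j) = 0" and \<phi>: "\<bar>\<phi> k\<bar> \<le> pi / 4" by auto
  have "As k \<in> carrier_mat n n"
    using jacobi_steps_hermitian[OF herm steps] k by (simp add: hermitian_mat_def)
  then have "plane_step n (\<lambda>r t. As k $$ (r, t)) (\<lambda>r t. As (Suc k) $$ (r, t)) i j \<and>
      plane_step n (\<lambda>r t. As (Suc k) $$ (r, t)) (\<lambda>r t. As k $$ (r, t)) i j"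
    unfolding Y using \<phi> ij_less by (intro rot_congruence_plane_step)
  moreover have "(cmod (As k $$ pr k))\<^sup>2 \<le> (\<Sum>k<N. (cmod (As k $$ pr k))\<^sup>2)"
    by (rule member_le_sum) (use k in auto)
  ultimately show "i < j \<and> j < n \<and>
      plane_step n (\<lambda>r t. As k $$ (r, t)) (\<lambda>r t. As (Suc k) $$ (r, t)) i j \<and>
      plane_step n (\<lambda>r t. As (Suc k) $$ (r, t)) (\<lambda>r t. As k $$ (r, t)) i j \<and>
      cmod (As k $$ (i, j)) \<le> sqrt (\<Sum>k<N. (cmod (As k $$ pr k))\<^sup>2) \<and>
      cmod (As (Suc k) $$ (i, j)) \<le> sqrt (\<Sum>k<N. (cmod (As k $$ pr k))\<^sup>2)"
    using ij ij_less zero by (simp add: real_le_rsqrt sum_nonneg)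
qed

lemma jacobi_sweep_rotation_trace:
  assumes A: "hermitian_mat n A" and sweep: "jacobi_sweep n ord A A'"
    and pairs: "\<And>k. k < tri n \<Longrightarrow> ord ! k \<in> pivot_pairs n"
  shows "hermitian_mat n A'" and "off2 A' \<le> off2 A"
    and "\<exists>B. B 0 = (\<lambda>r t. A $$ (r, t)) \<and> B (tri n) = (\<lambda>r t. A' $$ (r, t)) \<and>
           rotation_trace n (tri n) B (nth ord) (sqrt ((off2 A - off2 A') / 2))"
proof -
  obtain As \<phi> \<alpha> where As0: "As 0 = A" and AsN: "As (tri n) = A'"
    and steps: "jacobi_steps n (tri n) (nth ord) As \<phi> \<alpha>"
    using jacobi_sweepE[OF sweep pairs] by blast
  have herm: "hermitian_mat n (As 0)" using A As0 by simp
  show "hermitian_mat n A'" using jacobi_steps_hermitian[OF herm steps, of "tri n"] AsN by simp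
  have S: "(\<Sum>k<tri n. (cmod (As k $$ (ord ! k)))\<^sup>2) = (off2 A - off2 A') / 2"
    using jacobi_steps_off2[OF herm steps] As0 AsN by simp
  moreover have "0 \<le> (\<Sum>k<tri n. (cmod (As k $$ (ord ! k)))\<^sup>2)" by (simp add: sum_nonneg)
  ultimately show "off2 A' \<le> off2 A" by simp
  show "\<exists>B. B 0 = (\<lambda>r t. A $$ (r, t)) \<and> B (tri n) = (\<lambda>r t. A' $$ (r, t)) \<and>
      rotation_trace n (tri n) B (nth ord) (sqrt ((off2 A - off2 A') / 2))"
    using jacobi_steps_rotation_trace[OF herm steps] As0 AsN S by auto
qed

text \<open>Conjugation by the exchange matrix; \<open>reflect_pair\<close> keeps pivot pairs in the upper triangle.\<close>

definition reflect :: "nat \<Rightarrow> (nat \<Rightarrow> nat \<Rightarrow> 'a) \<Rightarrow> nat \<Rightarrow> nat \<Rightarrow> 'a" where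
  "reflect n X r t = X (n - 1 - r) (n - 1 - t)"

definition reflect_pair :: "nat \<Rightarrow> nat \<times> nat \<Rightarrow> nat \<times> nat" where
  "reflect_pair n q = (n - 1 - snd q, n - 1 - fst q)"

lemma plane_step_reflect:
  assumes step: "plane_step n X Y a b" and ab: "a < n" "b < n"
  shows "plane_step n (reflect n X) (reflect n Y) (n - 1 - a) (n - 1 - b)"
  unfolding plane_step_def reflect_def
proof (intro conjI allI impI)
  fix r t assume "r < n" "t < n" "r \<notin> {n - 1 - a, n - 1 - b}" "t \<notin> {n - 1 - a, n - 1 - b}"
  then have "n - 1 - r < n" "n - 1 - t < n" "n - 1 - r \<notin> {a, b}" "n - 1 - t \<notin> {a, b}"
    using ab by auto
  then show "Y (n - 1 - r) (n - 1 - t) = X (n - 1 - r) (n - 1 - t)"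
    using step unfolding plane_step_def by blast
next
  fix r u v assume r: "r < n" "r \<notin> {n - 1 - a, n - 1 - b}" and uv: "{u, v} = {n - 1 - a, n - 1 - b}"
  then have "n - 1 - r < n" "n - 1 - r \<notin> {a, b}" "{n - 1 - u, n - 1 - v} = {a, b}"
    using ab by (auto simp: doubleton_eq_iff)
  then show "cmod (Y (n - 1 - r) (n - 1 - u)) \<le> cmod (X (n - 1 - r) (n - 1 - u)) + cmod (X (n - 1 - r) (n - 1 - v))"
    "cmod (X (n - 1 - r) (n - 1 - u)) \<le> 2 * (cmod (Y (n - 1 - r) (n - 1 - u)) + cmod (X (n - 1 - r) (n - 1 - v)))"
    using step unfolding plane_step_def by blast+
qed

lemma rotation_trace_reverse:
  assumes trace: "rotation_trace n N B pr p" and pr': "\<And>k. k < N \<Longrightarrow> pr' k = pr (N - Suc k)"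
  shows "rotation_trace n N (\<lambda>k. B (N - k)) pr' p"
proof (rule rotation_traceI)
  fix k r t assume "k \<le> N" "r < n" "t < n"
  then show "cmod (B (N - k) t r) = cmod (B (N - k) r t)" using rotation_trace_norm_sym[OF trace] by simp
next
  fix k a b assume k: "k < N" and ab: "pr' k = (a, b)"
  then have "N - Suc k < N" "pr (N - Suc k) = (a, b)" and Suc: "Suc (N - Suc k) = N - k"
    using pr' by auto
  from rotation_trace_step[OF trace this(1,2)]
  show "a < b \<and> b < n \<and> plane_step n (B (N - k)) (B (N - Suc k)) a b \<and>
      plane_step n (B (N - Suc k)) (B (N - k)) a b \<and> cmod (B (N - k) a b) \<le> p \<and> cmod (B (N - Suc k) a b) \<le> p"
    unfolding Suc by blast
qed

lemma rotation_trace_reflect: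
  assumes trace: "rotation_trace n N B pr p"
  shows "rotation_trace n N (\<lambda>k. reflect n (B k)) (\<lambda>k. reflect_pair n (pr k)) p"
proof (rule rotation_traceI)
  fix k r t assume "k \<le> N" "r < n" "t < n"
  then show "cmod (reflect n (B k) t r) = cmod (reflect n (B k) r t)"
    using rotation_trace_norm_sym[OF trace] by (simp add: reflect_def)
next
  fix k a' b' assume k: "k < N" and ab': "reflect_pair n (pr k) = (a', b')"
  obtain a b where ab: "pr k = (a, b)" by fastforce
  then have a'b': "a' = n - 1 - b" "b' = n - 1 - a" using ab' by (auto simp: reflect_pair_def)
  note step = rotation_trace_step[OF trace k ab]
  have "reflect n (B k) a' b' = B k b a" "reflect n (B (Suc k)) a' b' = B (Suc k) b a"
    using step by (simp_all add: reflect_def a'b')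
  moreover have "cmod (B k b a) = cmod (B k a b)" "cmod (B (Suc k) b a) = cmod (B (Suc k) a b)"
    using rotation_trace_norm_sym[OF trace] k step by simp_all
  ultimately show "a' < b' \<and> b' < n \<and>
      plane_step n (reflect n (B k)) (reflect n (B (Suc k))) a' b' \<and>
      plane_step n (reflect n (B (Suc k))) (reflect n (B k)) a' b' \<and>
      cmod (reflect n (B k) a' b') \<le> p \<and> cmod (reflect n (B (Suc k)) a' b') \<le> p"
    using step plane_step_reflect[of n _ _ b a] unfolding a'b' by (auto simp: plane_step_commute)
qed

section \<open>Column-cyclic sweeps\<close>

definition offdiag_bounded :: "nat \<Rightarrow> (nat \<Rightarrow> nat \<Rightarrow> complex) \<Rightarrow> real \<Rightarrow> bool" where
  "offdiag_bounded s X c \<longleftrightarrow> (\<forall>r<s. \<forall>t<s. r \<noteq> t \<longrightarrow> cmod (X r t) \<le> c)"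

lemma offdiag_bounded_mono: "offdiag_bounded s X c \<Longrightarrow> c \<le> c' \<Longrightarrow> offdiag_bounded s X c'"
  unfolding offdiag_bounded_def using order_trans by blast

lemma offdiag_bounded_reflect: "offdiag_bounded n (reflect n X) c \<Longrightarrow> offdiag_bounded n X c"
  unfolding offdiag_bounded_def reflect_def
proof (intro allI impI)
  fix r t assume bound: "\<forall>r<n. \<forall>t<n. r \<noteq> t \<longrightarrow> cmod (X (n - 1 - r) (n - 1 - t)) \<le> c"
    and "r < n" "t < n" "r \<noteq> t"
  then show "cmod (X r t) \<le> c" using bound[rule_format, of "n - 1 - r" "n - 1 - t"] by simp
qed

lemma off2_le_offdiag_bounded:
  assumes M: "M \<in> carrier_mat n n" and bound: "offdiag_bounded n (\<lambda>r t. M $$ (r, t)) c"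
  shows "off2 M \<le> (real n * c)\<^sup>2"
proof -
  have "off2 M = (\<Sum>r<n. \<Sum>t<n. if r = t then 0 else (cmod (M $$ (r, t)))\<^sup>2)"
    using M by (simp add: off2_def)
  also have "\<dots> \<le> (\<Sum>r<n. \<Sum>t<n. c\<^sup>2)"
  proof (intro sum_mono)
    fix r t assume "r \<in> {..<n}" "t \<in> {..<n}"
    then show "(if r = t then 0 else (cmod (M $$ (r, t)))\<^sup>2) \<le> c\<^sup>2"
      using bound unfolding offdiag_bounded_def by (auto intro: power_mono)
  qed
  also have "\<dots> = (real n * c)\<^sup>2" by (simp add: power2_eq_square)
  finally show ?thesis .
qed

lemma plane_step_offdiag_bounded:
  assumes step: "plane_step n X Y a b" and ab: "a < s" "b < s" "a \<noteq> b" "s \<le> n"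
    and X: "offdiag_bounded s X c" and pivot: "cmod (Y a b) \<le> c"
    and sym: "\<And>r t. r < n \<Longrightarrow> t < n \<Longrightarrow> cmod (Y t r) = cmod (Y r t)"
  shows "offdiag_bounded s Y (2 * c)"
  unfolding offdiag_bounded_def
proof (intro allI impI)
  fix r t assume rt: "r < s" "t < s" "r \<noteq> t"
  have c: "0 \<le> c" using pivot norm_ge_zero order_trans by blast
  have one_side: "cmod (Y r' t') \<le> 2 * c" if "r' < s" "r' \<notin> {a, b}" "t' \<in> {a, b}" for r' t'
  proof -
    obtain v where v: "{t', v} = {a, b}" using \<open>t' \<in> {a, b}\<close> by auto
    then have "t' < s" "v < s" "r' \<noteq> t'" "r' \<noteq> v" using ab that by (auto simp: doubleton_eq_iff)
    then have "cmod (X r' t') \<le> c" "cmod (X r' v) \<le> c" using X that by (auto simp: offdiag_bounded_def)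
    moreover have "cmod (Y r' t') \<le> cmod (X r' t') + cmod (X r' v)"
      using step that v ab unfolding plane_step_def by auto
    ultimately show ?thesis by simp
  qed
  consider "r \<notin> {a, b}" "t \<notin> {a, b}" | "r \<notin> {a, b}" "t \<in> {a, b}" | "r \<in> {a, b}" "t \<notin> {a, b}"
    | "{r, t} = {a, b}"
    using rt(3) by (auto simp: doubleton_eq_iff)
  then show "cmod (Y r t) \<le> 2 * c"
  proof cases
    case 1
    then have "Y r t = X r t" using step rt ab unfolding plane_step_def by auto
    then show ?thesis using X rt c unfolding offdiag_bounded_def by fastforce
  next
    case 2
    then show ?thesis using one_side rt by blast
  next
    case 3
    then show ?thesis using one_side[of t r] sym[of r t] rt ab by simp
  next
    case 4
    then have "cmod (Y r t) = cmod (Y a b)" using sym[of a b] ab by (auto simp: doubleton_eq_iff)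
    then show ?thesis using pivot c by simp
  qed
qed

lemma distinct_nth_notin_set_take: "distinct xs \<Longrightarrow> k \<le> m \<Longrightarrow> m < length xs \<Longrightarrow> xs ! m \<notin> set (take k xs)"
  by (auto simp: in_set_conv_nth nth_eq_iff_index_eq)

primrec block_bound :: "nat \<Rightarrow> nat \<Rightarrow> real" where
  "block_bound n 0 = 0"
| "block_bound n (Suc s) = 4 ^ n * (1 + 2 * block_bound n s)"

lemma block_bound_nonneg: "0 \<le> block_bound n s"
  by (induction s) simp_all

definition column_cyclic_pairs :: "nat \<Rightarrow> (nat \<Rightarrow> nat \<times> nat) \<Rightarrow> bool" where
  "column_cyclic_pairs n pr \<longleftrightarrow> (\<exists>\<tau>. (\<forall>s<n. distinct (\<tau> s) \<and> set (\<tau> s) = {0..<s}) \<and>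
     (\<forall>s<n. \<forall>m<s. pr (tri s + m) = (\<tau> s ! m, s)))"

locale column_cyclic_trace =
  fixes n :: nat and B :: "nat \<Rightarrow> nat \<Rightarrow> nat \<Rightarrow> complex" and pr :: "nat \<Rightarrow> nat \<times> nat" and p :: real
    and \<tau> :: "nat \<Rightarrow> nat list"
  assumes trace: "rotation_trace n (tri n) B pr p"
    and nonneg: "0 \<le> p"
    and perm: "\<And>s. s < n \<Longrightarrow> distinct (\<tau> s) \<and> set (\<tau> s) = {0..<s}"
    and pair: "\<And>s m. s < n \<Longrightarrow> m < s \<Longrightarrow> pr (tri s + m) = (\<tau> s ! m, s)"
begin

lemma length_tau: "s < n \<Longrightarrow> length (\<tau> s) = s"
  using perm distinct_card by fastforce

lemma tau_less: "s < n \<Longrightarrow> m < s \<Longrightarrow> \<tau> s ! m < s"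
  using perm length_tau nth_mem by fastforce

lemma norm_sym: "k \<le> tri n \<Longrightarrow> r < n \<Longrightarrow> t < n \<Longrightarrow> cmod (B k t r) = cmod (B k r t)"
  by (rule rotation_trace_norm_sym[OF trace])

lemma column_step:
  assumes "s < n" "m < s"
  shows "tri s + m < tri n \<and> plane_step n (B (tri s + m)) (B (Suc (tri s + m))) (\<tau> s ! m) s \<and>
    cmod (B (tri s + m) (\<tau> s ! m) s) \<le> p \<and> cmod (B (Suc (tri s + m)) (\<tau> s ! m) s) \<le> p"
proof -
  have "tri s + m < tri (Suc s)" using assms by (simp add: tri_Suc)
  also have "\<dots> \<le> tri n" using assms by (intro tri_mono) simp
  finally show ?thesis using rotation_trace_step[OF trace _ pair[OF assms]] by blast
qed

lemma frozen_entries: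
  assumes s: "s < n" and "l \<le> s" and rt: "r < n" "t < n" "r \<notin> insert s (set (take l (\<tau> s)))"
    "t \<notin> insert s (set (take l (\<tau> s)))"
  shows "B (tri s + l) r t = B (tri s) r t"
  using assms(2) rt(3,4)
proof (induction l)
  case 0 then show ?case by simp
next
  case (Suc l)
  have l: "l < length (\<tau> s)" using Suc.prems(1) length_tau[OF s] by simp
  then have "set (take (Suc l) (\<tau> s)) = insert (\<tau> s ! l) (set (take l (\<tau> s)))"
    by (simp add: take_Suc_conv_app_nth)
  then have "r \<notin> {\<tau> s ! l, s}" "t \<notin> {\<tau> s ! l, s}" and IH: "B (tri s + l) r t = B (tri s) r t"
    using Suc by auto
  then show ?case
    using column_step[OF s, of l] l length_tau[OF s] rt unfolding plane_step_def by auto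
qed

lemma column_entry_bound:
  assumes s: "s < n" and G: "0 \<le> G" and block: "offdiag_bounded s (B (tri s)) G" and r: "r < s"
  shows "cmod (B (tri s) r s) \<le> 2 ^ s * (p + 2 * G)"
proof -
  obtain m where m: "m < s" "\<tau> s ! m = r"
    using perm[OF s] length_tau[OF s] r by (metis atLeastLessThan_iff in_set_conv_nth zero_le)
  \<comment> \<open>Walking back from the step that annihilates (r, s): step \<open>tri s + k\<close> mixes column s only
    with column \<open>\<tau> s ! k\<close>, whose entry in row r is still the one of \<open>B (tri s)\<close>.\<close>
  have "cmod (B (tri s + k) r s) + 2 * G \<le> 2 ^ (m - k) * (p + 2 * G)" if "k \<le> m" for k
    using that
  proof (induction k rule: inc_induct)
    case base
    then show ?case using column_step[OF s m(1)] m by simp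
  next
    case (step k)
    have k: "k < s" using step.hyps m by simp
    have dist: "distinct (\<tau> s)" and len: "length (\<tau> s) = s" using perm[OF s] length_tau[OF s] by auto
    have rk: "r \<noteq> \<tau> s ! k" using m k step.hyps dist len by (auto simp: nth_eq_iff_index_eq)
    have "B (tri s + k) r (\<tau> s ! k) = B (tri s) r (\<tau> s ! k)"
      using frozen_entries[OF s, of k r "\<tau> s ! k"] distinct_nth_notin_set_take[OF dist, of k] m k step.hyps
        tau_less[OF s k] len s r by auto
    then have frozen: "cmod (B (tri s + k) r (\<tau> s ! k)) \<le> G"
      using block rk r tau_less[OF s k] by (auto simp: offdiag_bounded_def)
    have "cmod (B (tri s + k) r s) \<le> 2 * (cmod (B (Suc (tri s + k)) r s) + cmod (B (tri s + k) r (\<tau> s ! k)))"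
      using column_step[OF s k] rk r s unfolding plane_step_def by (auto simp: insert_commute)
    moreover have "m - k = Suc (m - Suc k)" using step.hyps by simp
    ultimately show ?case using step.IH frozen by simp
  qed
  from this[of 0] have "cmod (B (tri s) r s) + 2 * G \<le> 2 ^ m * (p + 2 * G)" by simp
  also have "\<dots> \<le> 2 ^ s * (p + 2 * G)" using m G nonneg by (intro mult_right_mono power_increasing) auto
  finally show ?thesis using G by simp
qed

lemma leading_block_extend:
  assumes s: "s < n" and block: "offdiag_bounded s (B (tri s)) H"
    and column: "\<And>r. r < s \<Longrightarrow> cmod (B (tri s) r s) \<le> H"
  shows "offdiag_bounded (Suc s) (B (tri s)) H"
  unfolding offdiag_bounded_def
proof (intro allI impI)
  fix r t assume rt: "r < Suc s" "t < Suc s" "r \<noteq> t"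
  have sym: "cmod (B (tri s) s r) = cmod (B (tri s) r s)" if "r < s" for r
    using norm_sym[OF tri_mono] that s by simp
  consider "r < s" "t < s" | "r < s" "t = s" | "r = s" "t < s" using rt by linarith
  then show "cmod (B (tri s) r t) \<le> H"
  proof cases
    case 1
    then show ?thesis using block rt unfolding offdiag_bounded_def by blast
  qed (use column sym in auto)
qed

lemma leading_block_growth:
  assumes s: "s < n" and block: "offdiag_bounded (Suc s) (B (tri s)) H" and pH: "p \<le> H"
  shows "offdiag_bounded (Suc s) (B (tri (Suc s))) (2 ^ s * H)"
proof -
  have "offdiag_bounded (Suc s) (B (tri s + j)) (2 ^ j * H)" if "j \<le> s" for j
    using that
  proof (induction j)
    case 0 then show ?case using block by simp
  next
    case (Suc j)
    then have j: "j < s" by simp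
    note step = column_step[OF s j]
    have "p \<le> 2 ^ j * H" using pH nonneg mult_right_mono[of 1 "2 ^ j" H] by simp
    then have "offdiag_bounded (Suc s) (B (Suc (tri s + j))) (2 * (2 ^ j * H))"
      using step tau_less[OF s j] s Suc.IH j norm_sym
      by (intro plane_step_offdiag_bounded[of n "B (tri s + j)" _ "\<tau> s ! j" s]) auto
    then show ?case by (simp add: mult.assoc)
  qed
  then show ?thesis by (simp add: tri_Suc)
qed

lemma leading_block_bound: "s \<le> n \<Longrightarrow> offdiag_bounded s (B (tri s)) (block_bound n s * p)"
proof (induction s)
  case 0 then show ?case by (simp add: offdiag_bounded_def)
next
  case (Suc s)
  then have s: "s < n" by simp
  define M where "M = block_bound n s"
  define H where "H = 2 ^ n * (1 + 2 * M) * p"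
  have M: "0 \<le> M" by (simp add: M_def block_bound_nonneg)
  have IH: "offdiag_bounded s (B (tri s)) (M * p)" using Suc s by (simp add: M_def)
  have column: "cmod (B (tri s) r s) \<le> H" if "r < s" for r
  proof -
    have "cmod (B (tri s) r s) \<le> 2 ^ s * (p + 2 * (M * p))"
      using column_entry_bound[OF s _ IH that] M nonneg by simp
    also have "\<dots> \<le> 2 ^ n * (p + 2 * (M * p))"
      using M nonneg s by (intro mult_right_mono power_increasing) auto
    finally show ?thesis by (simp add: H_def algebra_simps)
  qed
  have "1 * 1 \<le> 2 ^ n * (1 + 2 * M)" "1 * M \<le> 2 ^ n * (1 + 2 * M)"
    using M by (intro mult_mono; simp)+
  from this[simplified, THEN mult_right_mono, OF nonneg] have "p \<le> H" "M * p \<le> H"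
    by (simp_all add: H_def)
  have "offdiag_bounded (Suc s) (B (tri s)) H"
    using offdiag_bounded_mono[OF IH \<open>M * p \<le> H\<close>] column by (rule leading_block_extend[OF s])
  from leading_block_growth[OF s this \<open>p \<le> H\<close>]
  have "offdiag_bounded (Suc s) (B (tri (Suc s))) (2 ^ s * H)" .
  moreover have "2 ^ s * H \<le> block_bound n (Suc s) * p"
  proof -
    have "2 ^ s * H \<le> 2 ^ n * H" using s M nonneg by (intro mult_right_mono power_increasing) (auto simp: H_def)
    also have "\<dots> = block_bound n (Suc s) * p" by (simp add: H_def M_def power_mult_distrib[symmetric])
    finally show ?thesis .
  qed
  ultimately show ?case by (rule offdiag_bounded_mono)
qed

end

lemma column_cyclic_trace_offdiag_bounded:
  assumes "rotation_trace n (tri n) B pr p" "column_cyclic_pairs n pr" "0 \<le> p"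
  shows "offdiag_bounded n (B (tri n)) (block_bound n n * p)"
proof -
  obtain \<tau> where "\<forall>s<n. distinct (\<tau> s) \<and> set (\<tau> s) = {0..<s}" "\<forall>s<n. \<forall>m<s. pr (tri s + m) = (\<tau> s ! m, s)"
    using assms(2) unfolding column_cyclic_pairs_def by blast
  then interpret column_cyclic_trace n B pr p \<tau> using assms(1,3) by unfold_locales auto
  show ?thesis by (rule leading_block_bound) simp
qed

section \<open>The special cyclic orderings\<close>

lemma column_cyclic_pairs_cong:
  assumes "column_cyclic_pairs n pr" "\<And>k. k < tri n \<Longrightarrow> pr' k = pr k"
  shows "column_cyclic_pairs n pr'"
proof -
  have "tri s + m < tri n" if "s < n" "m < s" for s m
  proof -
    have "tri s + m < tri (Suc s)" using that by (simp add: tri_Suc)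
    also have "\<dots> \<le> tri n" using that by (intro tri_mono) simp
    finally show ?thesis .
  qed
  then show ?thesis using assms unfolding column_cyclic_pairs_def by auto
qed

lemma concat_blocks_nth:
  assumes "\<And>s. s < n \<Longrightarrow> length (F s) = s"
  shows "length (concat (map F [1..<n])) = tri n \<and>
    (\<forall>s<n. \<forall>m<s. concat (map F [1..<n]) ! (tri s + m) = F s ! m)"
  using assms
proof (induction n)
  case 0 then show ?case by (simp add: tri_def)
next
  case (Suc n)
  show ?case
  proof (cases "n = 0")
    case True then show ?thesis by (simp add: tri_def)
  next
    case False
    then have split: "concat (map F [1..<Suc n]) = concat (map F [1..<n]) @ F n" by simp
    have IH: "length (concat (map F [1..<n])) = tri n"
      "\<And>s m. s < n \<Longrightarrow> m < s \<Longrightarrow> concat (map F [1..<n]) ! (tri s + m) = F s ! m"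
      using Suc by auto
    have "concat (map F [1..<Suc n]) ! (tri s + m) = F s ! m" if "s < Suc n" "m < s" for s m
    proof (cases "s < n")
      case True
      have "tri s + m < tri (Suc s)" using that by (simp add: tri_Suc)
      also have "\<dots> \<le> tri n" using True by (intro tri_mono) simp
      finally show ?thesis unfolding split using IH True that by (simp add: nth_append)
    next
      case False
      then have "s = n" using that by simp
      then show ?thesis unfolding split using IH by (simp add: nth_append)
    qed
    then show ?thesis unfolding split using IH Suc.prems by (simp add: tri_Suc)
  qed
qed

lemma C_c_column_cyclic:
  assumes "c \<in> C_c n"
  shows "length c = tri n \<and> column_cyclic_pairs n (nth c)"
proof -
  obtain \<tau> where \<tau>: "\<forall>j. distinct (\<tau> j) \<and> set (\<tau> j) = {0..<j}"
    and c: "c = concat (map (\<lambda>j. map (\<lambda>i. (i, j)) (\<tau> j)) [1..<n])"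
    using assms unfolding C_c_def by blast
  have "length (map (\<lambda>i. (i, s)) (\<tau> s)) = s" for s using \<tau> distinct_card[of "\<tau> s"] by simp
  from concat_blocks_nth[of n "\<lambda>j. map (\<lambda>i. (i, j)) (\<tau> j)", OF this] show ?thesis
    using \<tau> \<open>\<And>s. length (map (\<lambda>i. (i, s)) (\<tau> s)) = s\<close> unfolding c column_cyclic_pairs_def
    by (intro conjI exI[of _ \<tau>]) auto
qed

lemma C_c_pivot_pairs: "c \<in> C_c n \<Longrightarrow> set c \<subseteq> pivot_pairs n"
  by (auto simp: C_c_def pivot_pairs_def)

lemma C_r_pivot_pairs: "c \<in> C_r n \<Longrightarrow> set c \<subseteq> pivot_pairs n"
  by (auto simp: C_r_def pivot_pairs_def)

lemma C_r_reflect: "c \<in> C_r n \<Longrightarrow> map (reflect_pair n) c \<in> C_c n"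
proof -
  assume "c \<in> C_r n"
  then obtain \<tau> where \<tau>: "\<forall>i. distinct (\<tau> i) \<and> set (\<tau> i) = {i<..<n}"
    and c: "c = concat (map (\<lambda>i. map (\<lambda>j. (i, j)) (\<tau> i)) (rev [0..<n - 1]))"
    unfolding C_r_def by blast
  define \<tau>' where "\<tau>' s = (if s < n then map (\<lambda>j. n - 1 - j) (\<tau> (n - 1 - s)) else [0..<s])" for s
  have "distinct (\<tau>' s) \<and> set (\<tau>' s) = {0..<s}" for s
  proof (cases "s < n")
    case True
    have "inj_on (\<lambda>j. n - 1 - j) (set (\<tau> (n - 1 - s)))" using \<tau> by (auto simp: inj_on_def)
    then have "distinct (map (\<lambda>j. n - 1 - j) (\<tau> (n - 1 - s)))" unfolding distinct_map using \<tau> by blast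
    moreover have "(\<lambda>j. n - 1 - j) ` {n - 1 - s<..<n} = {0..<s}"
    proof
      show "{0..<s} \<subseteq> (\<lambda>j. n - 1 - j) ` {n - 1 - s<..<n}"
      proof
        fix x assume "x \<in> {0..<s}"
        then show "x \<in> (\<lambda>j. n - 1 - j) ` {n - 1 - s<..<n}"
          using True by (intro image_eqI[of _ _ "n - 1 - x"]) auto
      qed
    qed (use True in auto)
    then have "set (map (\<lambda>j. n - 1 - j) (\<tau> (n - 1 - s))) = {0..<s}" using \<tau> by (metis list.set_map)
    ultimately show ?thesis using True by (simp only: \<tau>'_def if_True)
  qed (simp add: \<tau>'_def)
  moreover have "map (reflect_pair n) c = concat (map (\<lambda>j. map (\<lambda>i. (i, j)) (\<tau>' j)) [1..<n])"
  proof -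
    have "rev [0..<n - 1] = map (\<lambda>s. n - 1 - s) [1..<n]"
      by (rule nth_equalityI) (auto simp: rev_nth)
    then show ?thesis
      unfolding c by (auto simp: map_concat reflect_pair_def \<tau>'_def intro!: arg_cong[where f = concat])
  qed
  ultimately show "map (reflect_pair n) c \<in> C_c n" unfolding C_c_def by blast
qed

lemma rotation_trace_C_c_offdiag_bounded:
  assumes trace: "rotation_trace n (tri n) B pr p" and p: "0 \<le> p" and c: "c \<in> C_c n"
    and pr: "(\<forall>k<tri n. pr k = c ! k) \<or> (\<forall>k<tri n. reflect_pair n (pr k) = c ! k)"
  shows "offdiag_bounded n (B (tri n)) (block_bound n n * p)"
proof -
  have cc: "column_cyclic_pairs n (nth c)" using C_c_column_cyclic[OF c] by blast
  from pr show ?thesis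
  proof
    assume "\<forall>k<tri n. pr k = c ! k"
    then have "column_cyclic_pairs n pr" using column_cyclic_pairs_cong[OF cc, of pr] by simp
    then show ?thesis using column_cyclic_trace_offdiag_bounded[OF trace] p by blast
  next
    assume "\<forall>k<tri n. reflect_pair n (pr k) = c ! k"
    then have "column_cyclic_pairs n (\<lambda>k. reflect_pair n (pr k))"
      using column_cyclic_pairs_cong[OF cc, of "\<lambda>k. reflect_pair n (pr k)"] by simp
    then have "offdiag_bounded n (reflect n (B (tri n))) (block_bound n n * p)"
      using column_cyclic_trace_offdiag_bounded[OF rotation_trace_reflect[OF trace]] p by blast
    then show ?thesis by (rule offdiag_bounded_reflect)
  qed
qed

lemma C_sp_pivot_pairs:
  assumes "ord \<in> C_sp n" "k < tri n"
  shows "ord ! k \<in> pivot_pairs n"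
proof -
  have "length ord = tri n \<and> set ord \<subseteq> pivot_pairs n"
    using assms(1) C_c_column_cyclic C_c_pivot_pairs C_r_reflect[THEN C_c_column_cyclic] C_r_pivot_pairs
    unfolding C_sp_def by fastforce
  then show ?thesis using assms(2) by auto
qed

lemma jacobi_sweep_offdiag_bounded:
  assumes A: "hermitian_mat n A" and ord: "ord \<in> C_sp n" and sweep: "jacobi_sweep n ord A A'"
  defines "c \<equiv> block_bound n n * sqrt ((off2 A - off2 A') / 2)"
  shows "offdiag_bounded n (\<lambda>r t. A $$ (r, t)) c \<or> offdiag_bounded n (\<lambda>r t. A' $$ (r, t)) c"
proof -
  let ?N = "tri n"
  note pairs = C_sp_pivot_pairs[OF ord]
  obtain B where B: "B 0 = (\<lambda>r t. A $$ (r, t))" "B ?N = (\<lambda>r t. A' $$ (r, t))"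
    and trace: "rotation_trace n ?N B (nth ord) (sqrt ((off2 A - off2 A') / 2))"
    using jacobi_sweep_rotation_trace(3)[OF A sweep pairs] by blast
  have p: "0 \<le> sqrt ((off2 A - off2 A') / 2)" using jacobi_sweep_rotation_trace(2)[OF A sweep pairs] by simp
  have forward: "offdiag_bounded n (\<lambda>r t. A' $$ (r, t)) c"
    if "d \<in> C_c n" "(\<forall>k<?N. ord ! k = d ! k) \<or> (\<forall>k<?N. reflect_pair n (ord ! k) = d ! k)" for d
    using rotation_trace_C_c_offdiag_bounded[OF trace p that] B by (simp add: c_def)
  \<comment> \<open>Read backwards in time, a reversed ordering is a forward one, and the bound concerns A.\<close>
  have backward: "offdiag_bounded n (\<lambda>r t. A $$ (r, t)) c"
    if "d \<in> C_c n" "(\<forall>k<?N. ord ! (?N - Suc k) = d ! k) \<or> (\<forall>k<?N. reflect_pair n (ord ! (?N - Suc k)) = d ! k)"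
    for d
    using rotation_trace_C_c_offdiag_bounded[OF rotation_trace_reverse[OF trace, of "\<lambda>k. ord ! (?N - Suc k)"] p that] B
    by (simp add: c_def)
  from ord consider "ord \<in> C_c n" | d where "d \<in> C_c n" "ord = rev d"
    | "ord \<in> C_r n" | d where "d \<in> C_r n" "ord = rev d"
    unfolding C_sp_def by blast
  then show ?thesis
  proof cases
    case 1
    then show ?thesis using forward by blast
  next
    case (2 d)
    then have "ord ! (?N - Suc k) = d ! k" if "k < ?N" for k
      using C_c_column_cyclic[OF 2(1)] that by (simp add: rev_nth)
    then show ?thesis using backward[OF 2(1)] by blast
  next
    case 3
    then have "reflect_pair n (ord ! k) = map (reflect_pair n) ord ! k" if "k < ?N" for k
      using C_c_column_cyclic[OF C_r_reflect] that by simp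
    then show ?thesis using forward[OF C_r_reflect[OF 3]] by blast
  next
    case (4 d)
    then have "reflect_pair n (ord ! (?N - Suc k)) = map (reflect_pair n) d ! k" if "k < ?N" for k
      using C_c_column_cyclic[OF C_r_reflect[OF 4(1)]] that by (simp add: rev_nth)
    then show ?thesis using backward[OF C_r_reflect[OF 4(1)]] by blast
  qed
qed

lemma contraction_of_energy_gap:
  fixes x y D :: real
  assumes "0 \<le> D" "y \<le> x" "x \<le> D * ((x - y) / 2) \<or> y \<le> D * ((x - y) / 2)"
  shows "y \<le> D / (D + 2) * x"
proof -
  have "(D + 2) * y \<le> D * x" using assms by (auto simp: algebra_simps)
  then show ?thesis using assms(1) by (simp add: field_simps)
qed

theorem corollary3p4:
  fixes n :: nat
  assumes "n \<ge> 2"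
  shows "\<exists>\<gamma>::real. 0 \<le> \<gamma> \<and> \<gamma> < 1 \<and>
           (\<forall>A ord A'. hermitian_mat n A \<longrightarrow> ord \<in> C_sp n \<longrightarrow> jacobi_sweep n ord A A' \<longrightarrow>
              off2 A' \<le> \<gamma> * off2 A)"
proof -
  define D where "D = (real n * block_bound n n)\<^sup>2"
  have D: "0 \<le> D" by (simp add: D_def)
  show ?thesis
  proof (intro exI[of _ "D / (D + 2)"] conjI allI impI)
    show "0 \<le> D / (D + 2)" "D / (D + 2) < 1" using D by simp_all
    fix A ord A' assume A: "hermitian_mat n A" and ord: "ord \<in> C_sp n" and sweep: "jacobi_sweep n ord A A'"
    note sweep_facts = jacobi_sweep_rotation_trace[OF A sweep C_sp_pivot_pairs[OF ord]]
    have carrier: "A \<in> carrier_mat n n" "A' \<in> carrier_mat n n"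
      using A sweep_facts(1) by (simp_all add: hermitian_mat_def)
    define S where "S = (off2 A - off2 A') / 2"
    have "(real n * (block_bound n n * sqrt S))\<^sup>2 = D * S"
      using sweep_facts(2) by (simp add: S_def D_def power_mult_distrib)
    then have "off2 A \<le> D * S \<or> off2 A' \<le> D * S"
      using jacobi_sweep_offdiag_bounded[OF A ord sweep] off2_le_offdiag_bounded carrier
      unfolding S_def by metis
    then show "off2 A' \<le> D / (D + 2) * off2 A"
      using contraction_of_energy_gap[OF D sweep_facts(2)] by (simp add: S_def)
  qed
qed

end
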